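(* Let $a,b,c>0$ and set $M=\mathrm{e}^{B_2}\mathrm{e}^{B_1}$ with $B_1=\begin{bmatrix}-a&-b\\ c&0\end{bmatrix}$, $B_2=\begin{bmatrix}-a&b\\ -c&0\end{bmatrix}$. Write the characteristic polynomial of $M$ as $\lambda^2+\alpha\lambda+\beta$. Then $\beta=\mathrm{e}^{-2a}$ and, with $d=\sqrt{a^2-4bc}$ (a real or purely imaginary number) and provided $d\neq 0$, $$\alpha=-\frac{\mathrm{e}^{-a}\left(a^2\mathrm{e}^{d}+a^2\mathrm{e}^{-d}+2d^2-2a^2\right)}{d^2}.$$ Moreover, both eigenvalues of $M$ have modulus strictly less than $1$.
   Context: This applies to the flying capacitor model with $a=\frac{TR}{2L}$, $b=\frac{T}{2L}$, $c=\frac{T}{2C}$, in which case $M=\mathrm{e}^{\frac T2A_2}\mathrm{e}^{\frac T2A_1}$ for $A_1=\begin{bmatrix}-\frac RL & -\frac1L\\ \frac1C & 0\end{bmatrix}$, $A_2=\begin{bmatrix}-\frac RL & \frac1L\\ -\frac1C & 0\end{bmatrix}$. $\mathrm{e}^{B}$ denotes the matrix exponential. *)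

theory Defs
  imports "HOL-Analysis.Analysis" "HOL-Computational_Algebra.Polynomial"
begin

primrec mat_pow :: "'a::comm_ring_1^'n^'n \<Rightarrow> nat \<Rightarrow> 'a^'n^'n" where
  "mat_pow A 0 = mat 1"
| "mat_pow A (Suc k) = A ** mat_pow A k"

definition mat_exp :: "real^'n^'n \<Rightarrow> real^'n^'n" where
  "mat_exp A = (\<Sum>k. (1 / fact k) *\<^sub>R mat_pow A k)"

definition charpoly :: "real^'n^'n \<Rightarrow> real poly" where
  "charpoly A = det (mat [:0, 1:] - map_matrix (\<lambda>x. [:x:]) A)"

definition is_eigenvalue :: "real^'n^'n \<Rightarrow> complex \<Rightarrow> bool" where
  "is_eigenvalue A z \<longleftrightarrow> (\<exists>v::complex^'n. v \<noteq> 0 \<and> map_matrix complex_of_real A *v v = z *s v)"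

end

theory Submission
  imports Defs
begin

(* Both B1 and B2 have trace -a and determinant bc, so by Cayley-Hamilton
   exp B_i = P I + Q B_i with the same real numbers P and Q, and evaluating at the
   eigenvalues mu_+- = (-a +- d)/2 gives exp mu_+- = P + Q mu_+-.  Hence
   det (exp B_i) = exp mu_+ * exp mu_- = exp (-a), so beta = exp (-2a), and a direct
   computation gives -alpha = 2 exp (-a) + a^2 Q^2 with Q d = exp mu_+ - exp mu_-.
   Since d^2 < a^2, monotonicity of sinh t / t yields |a Q| < 1 - exp (-a), i.e.
   |alpha| < 1 + beta, which together with 0 < beta < 1 puts both roots of
   lambda^2 + alpha lambda + beta in the open unit disc. *)

(* pow_rem a e k = (p, q) means X^k = p + q X modulo X^2 + a X + e. *)
fun pow_rem :: "real \<Rightarrow> real \<Rightarrow> nat \<Rightarrow> real \<times> real" where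
  "pow_rem a e 0 = (1, 0)"
| "pow_rem a e (Suc k) = (- e * snd (pow_rem a e k), fst (pow_rem a e k) - a * snd (pow_rem a e k))"

lemma abs_pow_rem_le:
  "\<bar>fst (pow_rem a e k)\<bar> \<le> (1 + \<bar>a\<bar> + \<bar>e\<bar>) ^ k \<and> \<bar>snd (pow_rem a e k)\<bar> \<le> (1 + \<bar>a\<bar> + \<bar>e\<bar>) ^ k"
proof (induction k)
  case 0
  then show ?case by simp
next
  case (Suc k)
  let ?K = "1 + \<bar>a\<bar> + \<bar>e\<bar>"
  obtain p q where pq: "pow_rem a e k = (p, q)" by fastforce
  with Suc have p: "\<bar>p\<bar> \<le> ?K ^ k" and q: "\<bar>q\<bar> \<le> ?K ^ k" by auto
  have "\<bar>e\<bar> * \<bar>q\<bar> \<le> ?K * ?K ^ k"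
    using q by (intro mult_mono) auto
  moreover have "\<bar>p\<bar> + \<bar>a\<bar> * \<bar>q\<bar> \<le> ?K ^ k + \<bar>a\<bar> * ?K ^ k"
    using p mult_left_mono[OF q, of "\<bar>a\<bar>"] by simp
  moreover have "?K ^ k + \<bar>a\<bar> * ?K ^ k \<le> ?K * ?K ^ k"
    by (simp add: algebra_simps)
  ultimately show ?case
    using abs_triangle_ineq4[of p "a * q"] by (simp add: pq abs_mult)
qed

lemma summable_pow_rem:
  "summable (\<lambda>k. fst (pow_rem a e k) / fact k)" "summable (\<lambda>k. snd (pow_rem a e k) / fact k)"
proof -
  have bounded: "summable (\<lambda>k. f k / fact k)" if "\<And>k. \<bar>f k\<bar> \<le> (1 + \<bar>a\<bar> + \<bar>e\<bar>) ^ k" for f :: "nat \<Rightarrow> real"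
  proof (rule summable_comparison_test')
    show "summable (\<lambda>k. (1 + \<bar>a\<bar> + \<bar>e\<bar>) ^ k /\<^sub>R fact k)"
      by (rule summable_exp_generic)
    show "norm (f k / fact k) \<le> (1 + \<bar>a\<bar> + \<bar>e\<bar>) ^ k /\<^sub>R fact k" for k
    proof -
      have "\<bar>f k\<bar> / fact k \<le> (1 + \<bar>a\<bar> + \<bar>e\<bar>) ^ k / fact k"
        using that[of k] by (simp add: divide_right_mono)
      then show ?thesis by (simp add: field_simps)
    qed
  qed
  show "summable (\<lambda>k. fst (pow_rem a e k) / fact k)" "summable (\<lambda>k. snd (pow_rem a e k) / fact k)"
    using abs_pow_rem_le by (auto intro: bounded)
qed

definition exp_rem0 :: "real \<Rightarrow> real \<Rightarrow> real" where
  "exp_rem0 a e = (\<Sum>k. fst (pow_rem a e k) / fact k)"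

definition exp_rem1 :: "real \<Rightarrow> real \<Rightarrow> real" where
  "exp_rem1 a e = (\<Sum>k. snd (pow_rem a e k) / fact k)"

lemma sums_exp_rem:
  "(\<lambda>k. fst (pow_rem a e k) / fact k) sums exp_rem0 a e"
  "(\<lambda>k. snd (pow_rem a e k) / fact k) sums exp_rem1 a e"
  unfolding exp_rem0_def exp_rem1_def by (simp_all add: summable_sums summable_pow_rem)

lemma matrix_mul_scaleR_right: "(A::real^'n^'m) ** (r *\<^sub>R B) = r *\<^sub>R (A ** (B::real^'k^'n))"
  by (simp add: matrix_matrix_mult_def vec_eq_iff sum_distrib_left algebra_simps)

lemma mat_pow_eq_pow_rem:
  fixes B :: "real^'n^'n"
  assumes "B ** B = - (a *\<^sub>R B) - e *\<^sub>R mat 1"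
  shows "mat_pow B k = fst (pow_rem a e k) *\<^sub>R mat 1 + snd (pow_rem a e k) *\<^sub>R B"
proof (induction k)
  case 0
  then show ?case by simp
next
  case (Suc k)
  then show ?case
    by (simp add: matrix_add_ldistrib matrix_mul_scaleR_right assms algebra_simps)
qed

lemma mat_exp_eq_exp_rem:
  fixes B :: "real^'n^'n"
  assumes "B ** B = - (a *\<^sub>R B) - e *\<^sub>R mat 1"
  shows "mat_exp B = exp_rem0 a e *\<^sub>R mat 1 + exp_rem1 a e *\<^sub>R B"
proof -
  have "(\<lambda>k. (1 / fact k) *\<^sub>R mat_pow B k)
      = (\<lambda>k. (fst (pow_rem a e k) / fact k) *\<^sub>R mat 1 + (snd (pow_rem a e k) / fact k) *\<^sub>R B)"
    by (simp add: mat_pow_eq_pow_rem[OF assms] scaleR_add_right)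
  also have "\<dots> sums (exp_rem0 a e *\<^sub>R mat 1 + exp_rem1 a e *\<^sub>R B)"
    by (intro sums_add sums_scaleR_left sums_exp_rem)
  finally show ?thesis
    unfolding mat_exp_def by (rule sums_unique[symmetric])
qed

lemma pow_eq_pow_rem:
  fixes \<mu> :: "'a::real_field"
  assumes "\<mu>\<^sup>2 + of_real a * \<mu> + of_real e = 0"
  shows "\<mu> ^ k = of_real (fst (pow_rem a e k)) + of_real (snd (pow_rem a e k)) * \<mu>"
proof (induction k)
  case 0
  then show ?case by simp
next
  case (Suc k)
  have sq: "\<mu>\<^sup>2 = - of_real a * \<mu> - of_real e"
    using assms by (simp add: algebra_simps add_eq_0_iff2)
  have "\<mu> ^ Suc k = of_real (fst (pow_rem a e k)) * \<mu> + of_real (snd (pow_rem a e k)) * \<mu>\<^sup>2"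
    using Suc by (simp add: power2_eq_square algebra_simps)
  then show ?case
    unfolding sq by (simp add: algebra_simps)
qed

lemma exp_eq_exp_rem:
  fixes \<mu> :: "'a::{real_normed_field, banach}"
  assumes "\<mu>\<^sup>2 + of_real a * \<mu> + of_real e = 0"
  shows "exp \<mu> = of_real (exp_rem0 a e) + of_real (exp_rem1 a e) * \<mu>"
proof -
  have "(\<lambda>k. \<mu> ^ k /\<^sub>R fact k)
      = (\<lambda>k. of_real (fst (pow_rem a e k) / fact k) + of_real (snd (pow_rem a e k) / fact k) * \<mu>)"
    by (simp add: pow_eq_pow_rem[OF assms] scaleR_conv_of_real field_simps)
  also have "\<dots> sums (of_real (exp_rem0 a e) + of_real (exp_rem1 a e) * \<mu>)"
    by (intro sums_add sums_mult2 sums_of_real sums_exp_rem)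
  finally show ?thesis
    using exp_converges sums_unique2 by blast
qed

lemma exp_quadratic_roots:
  fixes d :: complex
  assumes "d\<^sup>2 = of_real (a\<^sup>2 - 4 * e)"
  shows "exp ((- of_real a + d) / 2) = of_real (exp_rem0 a e) + of_real (exp_rem1 a e) * ((- of_real a + d) / 2)"
    and "exp ((- of_real a - d) / 2) = of_real (exp_rem0 a e) + of_real (exp_rem1 a e) * ((- of_real a - d) / 2)"
proof -
  have root: "((- of_real a + \<delta>) / 2)\<^sup>2 + of_real a * ((- of_real a + \<delta>) / 2) + of_real e = 0"
    if "\<delta>\<^sup>2 = of_real (a\<^sup>2 - 4 * e)" for \<delta> :: complex
  proof -
    have "4 * (((- of_real a + \<delta>) / 2)\<^sup>2 + of_real a * ((- of_real a + \<delta>) / 2) + of_real e) = \<delta>\<^sup>2 - of_real (a\<^sup>2 - 4 * e)"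
      by (simp add: power2_eq_square field_simps)
    also have "\<dots> = 0"
      using that by simp
    finally show ?thesis
      by (metis mult_eq_0_iff zero_neq_numeral)
  qed
  show "exp ((- of_real a + d) / 2) = of_real (exp_rem0 a e) + of_real (exp_rem1 a e) * ((- of_real a + d) / 2)"
    by (rule exp_eq_exp_rem[OF root[OF assms]])
  show "exp ((- of_real a - d) / 2) = of_real (exp_rem0 a e) + of_real (exp_rem1 a e) * ((- of_real a - d) / 2)"
    using exp_eq_exp_rem[OF root[of "- d"]] assms by simp
qed

lemma exp_rem1_mult_sqrt_disc:
  fixes d :: complex
  assumes "d\<^sup>2 = of_real (a\<^sup>2 - 4 * e)"
  shows "of_real (exp_rem1 a e) * d = exp ((- of_real a + d) / 2) - exp ((- of_real a - d) / 2)"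
  unfolding exp_quadratic_roots[OF assms] by (simp add: field_simps)

lemma exp_rem_det:
  "(exp_rem0 a e)\<^sup>2 - a * exp_rem0 a e * exp_rem1 a e + e * (exp_rem1 a e)\<^sup>2 = exp (- a)"
proof -
  define d where "d = csqrt (of_real (a\<^sup>2 - 4 * e))"
  have d: "d\<^sup>2 = of_real (a\<^sup>2 - 4 * e)"
    by (simp add: d_def)
  have "(- of_real a + d) / 2 + (- of_real a - d) / 2 = - complex_of_real a"
    by (simp add: field_simps)
  then have "exp ((- of_real a + d) / 2) * exp ((- of_real a - d) / 2) = exp (- complex_of_real a)"
    by (metis exp_add)
  moreover
  have "exp ((- of_real a + d) / 2) * exp ((- of_real a - d) / 2)
      = (of_real (exp_rem0 a e))\<^sup>2 - of_real a * of_real (exp_rem0 a e) * of_real (exp_rem1 a e)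
        + (of_real (exp_rem1 a e))\<^sup>2 * ((of_real a)\<^sup>2 - d\<^sup>2) / 4"
    unfolding exp_quadratic_roots[OF d] by (simp add: power2_eq_square field_simps)
  also have "\<dots> = of_real ((exp_rem0 a e)\<^sup>2 - a * exp_rem0 a e * exp_rem1 a e + e * (exp_rem1 a e)\<^sup>2)"
    by (simp add: d field_simps)
  ultimately show ?thesis
    by (metis exp_of_real of_real_eq_iff of_real_minus)
qed

lemma exp_rem1_pos_disc:
  assumes "0 < s" and "s\<^sup>2 = a\<^sup>2 - 4 * e"
  shows "exp_rem1 a e * s = 2 * exp (- a / 2) * sinh (s / 2)"
proof -
  have "(complex_of_real s)\<^sup>2 = of_real (a\<^sup>2 - 4 * e)"
    by (simp add: assms(2) flip: of_real_power)
  from arg_cong[OF exp_rem1_mult_sqrt_disc[OF this], of Re]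
  have "exp_rem1 a e * s = exp ((- a + s) / 2) - exp ((- a - s) / 2)"
    by (simp add: Re_exp)
  also have "\<dots> = exp (- a / 2) * (exp (s / 2) - exp (- (s / 2)))"
    by (simp add: right_diff_distrib flip: exp_add) (simp add: field_simps)
  also have "\<dots> = 2 * exp (- a / 2) * sinh (s / 2)"
    by (simp add: sinh_field_def)
  finally show ?thesis .
qed

lemma exp_rem1_neg_disc:
  assumes "0 < s" and "s\<^sup>2 = 4 * e - a\<^sup>2"
  shows "exp_rem1 a e * s = 2 * exp (- a / 2) * sin (s / 2)"
proof -
  have "(\<i> * complex_of_real s)\<^sup>2 = of_real (a\<^sup>2 - 4 * e)"
    by (simp add: assms(2) power_mult_distrib flip: of_real_power)
  from arg_cong[OF exp_rem1_mult_sqrt_disc[OF this], of Im]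
  show ?thesis
    by (simp add: Im_exp)
qed

lemma exp_rem1_zero_disc:
  assumes "e = a\<^sup>2 / 4"
  shows "exp_rem1 a e = exp (- a / 2)"
proof -
  define m where "m = - a / 2"
  have closed_form: "pow_rem a e k = ((1 - real k) * m ^ k, real k * m ^ (k - 1))" for k
  proof (induction k)
    case 0
    then show ?case by simp
  next
    case (Suc k)
    then show ?case
      by (cases k) (simp_all add: m_def assms power2_eq_square field_simps)
  qed
  have "(\<lambda>k. snd (pow_rem a e (Suc k)) / fact (Suc k)) = (\<lambda>k. m ^ k /\<^sub>R fact k)"
    by (simp add: closed_form field_simps del: pow_rem.simps of_nat_Suc)
  then have "(\<lambda>k. snd (pow_rem a e (Suc k)) / fact (Suc k)) sums exp m"
    using exp_converges[of m] by simp
  then have "(\<lambda>k. snd (pow_rem a e k) / fact k) sums exp m"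
    by (rule sums_Suc_imp[rotated]) simp
  then show ?thesis
    using sums_exp_rem(2) sums_unique2 m_def by blast
qed

lemma sinh_real_gt_self:
  fixes x :: real
  assumes "0 < x"
  shows "x < sinh x"
proof -
  have "sinh 0 - 0 < sinh x - x"
  proof (rule DERIV_pos_imp_increasing_open[OF assms])
    fix t :: real
    assume "0 < t" "t < x"
    then have "0 < cosh t - 1"
      using cosh_real_nonneg_less_iff[of 0 t] by simp
    moreover have "DERIV (\<lambda>t. sinh t - t) t :> cosh t - 1"
      by (auto intro!: derivative_eq_intros)
    ultimately show "\<exists>l. DERIV (\<lambda>t. sinh t - t) t :> l \<and> 0 < l" by blast
  qed (auto intro!: continuous_intros)
  then show ?thesis by simp
qed

lemma sinh_less_mult_cosh:
  fixes x :: real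
  assumes "0 < x"
  shows "sinh x < x * cosh x"
proof -
  have "0 * cosh 0 - sinh 0 < x * cosh x - sinh x"
  proof (rule DERIV_pos_imp_increasing_open[OF assms])
    fix t :: real
    assume "0 < t" "t < x"
    then have "0 < t * sinh t"
      by simp
    moreover have "DERIV (\<lambda>t. t * cosh t - sinh t) t :> t * sinh t"
      by (auto intro!: derivative_eq_intros)
    ultimately show "\<exists>l. DERIV (\<lambda>t. t * cosh t - sinh t) t :> l \<and> 0 < l" by blast
  qed (auto intro!: continuous_intros)
  then show ?thesis by simp
qed

lemma sinh_div_self_strict_mono:
  fixes x y :: real
  assumes "0 < x" and "x < y"
  shows "sinh x / x < sinh y / y"
proof (rule DERIV_pos_imp_increasing_open[OF assms(2)])
  fix t :: real
  assume "x < t" "t < y"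
  then have "0 < t" using assms by simp
  then have "DERIV (\<lambda>t. sinh t / t) t :> (t * cosh t - sinh t) / t\<^sup>2"
    by (auto intro!: derivative_eq_intros simp: power2_eq_square algebra_simps)
  moreover have "0 < (t * cosh t - sinh t) / t\<^sup>2"
    using sinh_less_mult_cosh[OF \<open>0 < t\<close>] \<open>0 < t\<close> by simp
  ultimately show "\<exists>l. DERIV (\<lambda>t. sinh t / t) t :> l \<and> 0 < l" by blast
qed (use assms in \<open>auto intro!: continuous_intros\<close>)

(* With s^2 = a^2 - 4e < a^2, Q = exp_rem1 a e equals exp (-a/2) times sinh (s/2) / (s/2) for
   real s (sin for imaginary s), while 1 - exp (-a) = 2 exp (-a/2) sinh (a/2). *)
lemma abs_exp_rem1_lt:
  assumes "0 < a" and "0 < e"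
  shows "a * \<bar>exp_rem1 a e\<bar> < 1 - exp (- a)"
proof -
  define Q where "Q = exp_rem1 a e"
  have "1 - exp (- a) = exp (- a / 2) * (exp (a / 2) - exp (- (a / 2)))"
    by (simp add: right_diff_distrib flip: exp_add)
  also have "\<dots> = 2 * exp (- a / 2) * sinh (a / 2)"
    by (simp add: sinh_field_def)
  finally have one_minus_exp: "1 - exp (- a) = 2 * exp (- a / 2) * sinh (a / 2)" .
  have "\<bar>Q\<bar> * (a / 2) < exp (- a / 2) * sinh (a / 2)"
  proof (cases "a\<^sup>2 - 4 * e" "0 :: real" rule: linorder_cases)
    case less
    define s where "s = sqrt (4 * e - a\<^sup>2)"
    have s: "0 < s" "s\<^sup>2 = 4 * e - a\<^sup>2"
      using less by (simp_all add: s_def)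
    have "\<bar>Q\<bar> * s = 2 * exp (- a / 2) * \<bar>sin (s / 2)\<bar>"
      using arg_cong[OF exp_rem1_neg_disc[OF s], of abs] s(1) by (simp add: Q_def abs_mult)
    also have "\<dots> \<le> exp (- a / 2) * s"
      using abs_sin_x_le_abs_x[of "s / 2"] s(1) by simp
    finally have "\<bar>Q\<bar> \<le> exp (- a / 2)"
      using s(1) by simp
    then have "\<bar>Q\<bar> * (a / 2) \<le> exp (- a / 2) * (a / 2)"
      using assms(1) by simp
    also have "\<dots> < exp (- a / 2) * sinh (a / 2)"
      using sinh_real_gt_self[of "a / 2"] assms(1) by simp
    finally show ?thesis .
  next
    case equal
    then have "Q = exp (- a / 2)"
      unfolding Q_def by (intro exp_rem1_zero_disc) simp
    then show ?thesis
      using sinh_real_gt_self[of "a / 2"] assms(1) by simp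
  next
    case greater
    define s where "s = sqrt (a\<^sup>2 - 4 * e)"
    have s: "0 < s" "s\<^sup>2 = a\<^sup>2 - 4 * e"
      using greater by (simp_all add: s_def)
    have "s < sqrt (a\<^sup>2)"
      unfolding s_def using assms by (intro real_sqrt_less_mono) simp
    then have "s < a"
      using assms(1) by simp
    have Q: "Q = exp (- a / 2) * (sinh (s / 2) / (s / 2))"
      using exp_rem1_pos_disc[OF s] s(1) by (simp add: Q_def field_simps)
    then have "\<bar>Q\<bar> * (a / 2) = exp (- a / 2) * (sinh (s / 2) / (s / 2)) * (a / 2)"
      using s(1) by simp
    also have "\<dots> < exp (- a / 2) * (sinh (a / 2) / (a / 2)) * (a / 2)"
      using sinh_div_self_strict_mono[of "s / 2" "a / 2"] s(1) \<open>s < a\<close> assms(1)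
      by (intro mult_strict_right_mono mult_strict_left_mono) simp_all
    also have "\<dots> = exp (- a / 2) * sinh (a / 2)"
      using assms(1) by simp
    finally show ?thesis .
  qed
  then show ?thesis
    unfolding one_minus_exp Q_def by (simp add: algebra_simps)
qed

lemma companion_mult_self:
  fixes a x y :: real
  defines "B \<equiv> vector [vector [-a, x], vector [y, 0]] :: real^2^2"
  shows "B ** B = - (a *\<^sub>R B) - (- (x * y)) *\<^sub>R mat 1"
  by (simp add: B_def vec_eq_iff forall_2 matrix_matrix_mult_def sum_2 mat_def algebra_simps)

lemma charpoly_2x2:
  fixes A :: "real^2^2"
  shows "charpoly A = [: A$1$1 * A$2$2 - A$1$2 * A$2$1, - (A$1$1 + A$2$2), 1 :]"
  unfolding charpoly_def det_2 by (simp add: mat_def algebra_simps)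

lemma charpoly_mat_exp_mult:
  fixes a b c :: real
  shows "charpoly (mat_exp (vector [vector [-a, b], vector [-c, 0]] :: real^2^2)
                   ** mat_exp (vector [vector [-a, -b], vector [c, 0]] :: real^2^2))
         = [: exp (- 2 * a), - (2 * exp (- a) + (a * exp_rem1 a (b * c))\<^sup>2), 1 :]"
proof -
  define P where "P = exp_rem0 a (b * c)"
  define Q where "Q = exp_rem1 a (b * c)"
  have "mat_exp (vector [vector [-a, b], vector [-c, 0]] :: real^2^2)
      = P *\<^sub>R mat 1 + Q *\<^sub>R vector [vector [-a, b], vector [-c, 0]]"
    using mat_exp_eq_exp_rem[OF companion_mult_self[of a b "- c"]] by (simp add: P_def Q_def)
  moreover have "mat_exp (vector [vector [-a, -b], vector [c, 0]] :: real^2^2)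
      = P *\<^sub>R mat 1 + Q *\<^sub>R vector [vector [-a, -b], vector [c, 0]]"
    using mat_exp_eq_exp_rem[OF companion_mult_self[of a "- b" c]] by (simp add: P_def Q_def)
  ultimately have "charpoly (mat_exp (vector [vector [-a, b], vector [-c, 0]] :: real^2^2)
                   ** mat_exp (vector [vector [-a, -b], vector [c, 0]] :: real^2^2))
      = [: (P\<^sup>2 - a * P * Q + b * c * Q\<^sup>2)\<^sup>2, - (2 * (P\<^sup>2 - a * P * Q + b * c * Q\<^sup>2) + (a * Q)\<^sup>2), 1 :]"
    by (simp add: charpoly_2x2 matrix_matrix_mult_def sum_2 mat_def power2_eq_square algebra_simps)
  also have "P\<^sup>2 - a * P * Q + b * c * Q\<^sup>2 = exp (- a)"
    using exp_rem_det[of a "b * c"] by (simp add: P_def Q_def)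
  finally show ?thesis
    by (simp add: Q_def flip: exp_double)
qed

lemma is_eigenvalue_charpoly_root_2x2:
  fixes A :: "real^2^2"
  assumes "is_eigenvalue A z" and "charpoly A = [:\<beta>, \<alpha>, 1:]"
  shows "z\<^sup>2 + of_real \<alpha> * z + of_real \<beta> = 0"
proof -
  obtain v :: "complex^2" where "v \<noteq> 0" and v: "map_matrix complex_of_real A *v v = z *s v"
    using assms(1) unfolding is_eigenvalue_def by blast
  have \<alpha>: "\<alpha> = - (A$1$1 + A$2$2)" and \<beta>: "\<beta> = A$1$1 * A$2$2 - A$1$2 * A$2$1"
    using assms(2) unfolding charpoly_2x2 by simp_all
  from v have e1: "of_real (A$1$1) * v$1 + of_real (A$1$2) * v$2 = z * v$1"
    and e2: "of_real (A$2$1) * v$1 + of_real (A$2$2) * v$2 = z * v$2"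
    by (simp_all add: vec_eq_iff forall_2 matrix_vector_mult_def sum_2)
  let ?D = "z\<^sup>2 + of_real \<alpha> * z + of_real \<beta>"
  have "?D * v$1 = (of_real (A$2$2) - z) * (of_real (A$1$1) * v$1 + of_real (A$1$2) * v$2 - z * v$1)
      - of_real (A$1$2) * (of_real (A$2$1) * v$1 + of_real (A$2$2) * v$2 - z * v$2)"
    by (simp add: \<alpha> \<beta> algebra_simps power2_eq_square)
  then have "?D * v$1 = 0"
    using e1 e2 by simp
  moreover have "?D * v$2 = (of_real (A$1$1) - z) * (of_real (A$2$1) * v$1 + of_real (A$2$2) * v$2 - z * v$2)
      - of_real (A$2$1) * (of_real (A$1$1) * v$1 + of_real (A$1$2) * v$2 - z * v$1)"
    by (simp add: \<alpha> \<beta> algebra_simps power2_eq_square)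
  then have "?D * v$2 = 0"
    using e1 e2 by simp
  moreover have "v$1 \<noteq> 0 \<or> v$2 \<noteq> 0"
    using \<open>v \<noteq> 0\<close> by (auto simp: vec_eq_iff forall_2)
  ultimately show ?thesis
    by auto
qed

lemma quadratic_root_in_unit_disc:
  fixes z :: complex and \<alpha> \<beta> :: real
  assumes "z\<^sup>2 + of_real \<alpha> * z + of_real \<beta> = 0"
    and "0 < \<beta>" and "\<beta> < 1" and "\<bar>\<alpha>\<bar> < 1 + \<beta>"
  shows "cmod z < 1"
proof -
  obtain x y where z: "z = Complex x y"
    by (cases z)
  from assms(1) have re: "x\<^sup>2 - y\<^sup>2 + \<alpha> * x + \<beta> = 0" and im: "(2 * x + \<alpha>) * y = 0"
    by (simp_all add: z complex_eq_iff power2_eq_square algebra_simps)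
  show ?thesis
  proof (cases "y = 0")
    case False
    with im have "\<alpha> = - 2 * x"
      by simp
    then have "\<alpha> * x = - 2 * x\<^sup>2"
      by (simp add: power2_eq_square)
    with re assms(3) have "(cmod z)\<^sup>2 < 1\<^sup>2"
      by (simp add: z cmod_def)
    then show ?thesis
      by (rule power_less_imp_less_base) simp
  next
    case True
    define w where "w = - \<alpha> - x"
    \<comment> \<open>x and w are the two real roots; the products below are the values of the polynomial at 1 and -1.\<close>
    have "x * w = \<beta>"
      using re True by (simp add: w_def power2_eq_square algebra_simps)
    have "0 < (1 - x) * (1 - w)" and "0 < (1 + x) * (1 + w)"
      using \<open>x * w = \<beta>\<close> assms(4) by (simp_all add: w_def algebra_simps)
    have "\<bar>x\<bar> < 1"
    proof (cases "\<bar>w\<bar> < 1")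
      case True
      then have "0 < 1 - x" "0 < 1 + x"
        using \<open>0 < (1 - x) * (1 - w)\<close> \<open>0 < (1 + x) * (1 + w)\<close> by (auto simp: zero_less_mult_iff)
      then show ?thesis by linarith
    next
      case False
      then have "\<bar>x\<bar> \<le> \<bar>x\<bar> * \<bar>w\<bar>"
        by (simp add: mult_le_cancel_left1)
      then show ?thesis
        using \<open>x * w = \<beta>\<close> assms(2,3) by (simp add: abs_mult)
    qed
    then show ?thesis
      by (simp add: z True cmod_def)
  qed
qed

lemma exp_rem1_sq_mult_disc:
  fixes d :: complex
  assumes "d\<^sup>2 = of_real (a\<^sup>2 - 4 * e)"
  shows "(of_real (exp_rem1 a e))\<^sup>2 * d\<^sup>2 = exp (- of_real a) * (exp d + exp (- d) - 2)"
proof -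
  define u v where "u = (- of_real a + d) / 2" and "v = (- of_real a - d) / 2"
  have args: "2 * u = - of_real a + d" "2 * v = - of_real a - d" "u + v = - of_real a"
    by (simp_all add: u_def v_def field_simps)
  have "(of_real (exp_rem1 a e))\<^sup>2 * d\<^sup>2 = (exp u - exp v)\<^sup>2"
    unfolding power_mult_distrib[symmetric] exp_rem1_mult_sqrt_disc[OF assms] u_def v_def ..
  also have "\<dots> = exp (2 * u) + exp (2 * v) - 2 * exp (u + v)"
    by (simp only: power2_diff exp_double exp_add) (simp add: algebra_simps)
  also have "\<dots> = exp (- of_real a) * (exp d + exp (- d) - 2)"
    unfolding args by (simp add: exp_add exp_diff exp_minus field_simps)
  finally show ?thesis .
qed

lemma trace_coeff_closed_form:
  fixes d :: complex
  assumes "d\<^sup>2 = of_real (a\<^sup>2 - 4 * e)" and "d \<noteq> 0"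
  shows "of_real (- (2 * exp (- a) + (a * exp_rem1 a e)\<^sup>2))
    = - (exp (- of_real a) * ((of_real a)\<^sup>2 * exp d + (of_real a)\<^sup>2 * exp (- d) + 2 * d\<^sup>2 - 2 * (of_real a)\<^sup>2)) / d\<^sup>2"
proof -
  have "of_real (- (2 * exp (- a) + (a * exp_rem1 a e)\<^sup>2)) * d\<^sup>2
      = - (2 * exp (- of_real a) * d\<^sup>2 + (of_real a)\<^sup>2 * ((of_real (exp_rem1 a e))\<^sup>2 * d\<^sup>2))"
    by (simp add: exp_of_real[symmetric] power_mult_distrib algebra_simps)
  also have "\<dots> = - (exp (- of_real a) * ((of_real a)\<^sup>2 * exp d + (of_real a)\<^sup>2 * exp (- d) + 2 * d\<^sup>2 - 2 * (of_real a)\<^sup>2))"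
    unfolding exp_rem1_sq_mult_disc[OF assms(1)] by (simp add: algebra_simps)
  finally show ?thesis
    using assms(2) by (simp add: field_simps)
qed

lemma trace_coeff_lt:
  assumes "0 < a" and "0 < e"
  shows "2 * exp (- a) + (a * exp_rem1 a e)\<^sup>2 < 1 + exp (- 2 * a)"
proof -
  have "\<bar>a * exp_rem1 a e\<bar> < 1 - exp (- a)"
    using abs_exp_rem1_lt[OF assms] assms(1) by (simp add: abs_mult)
  then have "(a * exp_rem1 a e)\<^sup>2 < (1 - exp (- a))\<^sup>2"
    by (metis abs_ge_zero power2_abs power_strict_mono zero_less_numeral)
  then show ?thesis
    by (simp add: power2_diff flip: exp_double)
qed

theorem mainTheorem2:
  fixes a b c \<alpha> \<beta> :: real
  assumes "a > 0" and "b > 0" and "c > 0"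
    and "charpoly (mat_exp (vector [vector [-a, b], vector [-c, 0]] :: real^2^2)
                   ** mat_exp (vector [vector [-a, -b], vector [c, 0]] :: real^2^2))
         = [:\<beta>, \<alpha>, 1:]"
  shows "\<beta> = exp (-2 * a)
    \<and> (let d = csqrt (complex_of_real (a\<^sup>2 - 4 * b * c)) in
         d \<noteq> 0 \<longrightarrow>
         complex_of_real \<alpha> =
           - (exp (- complex_of_real a) * ((complex_of_real a)\<^sup>2 * exp d
               + (complex_of_real a)\<^sup>2 * exp (- d) + 2 * d\<^sup>2 - 2 * (complex_of_real a)\<^sup>2)) / d\<^sup>2)
    \<and> (\<forall>z. is_eigenvalue (mat_exp (vector [vector [-a, b], vector [-c, 0]] :: real^2^2)
                   ** mat_exp (vector [vector [-a, -b], vector [c, 0]] :: real^2^2)) z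
           \<longrightarrow> cmod z < 1)"
proof -
  have \<beta>: "\<beta> = exp (- 2 * a)" and \<alpha>: "\<alpha> = - (2 * exp (- a) + (a * exp_rem1 a (b * c))\<^sup>2)"
    using assms(4) unfolding charpoly_mat_exp_mult by simp_all
  have "complex_of_real \<alpha> =
      - (exp (- complex_of_real a) * ((complex_of_real a)\<^sup>2 * exp d
          + (complex_of_real a)\<^sup>2 * exp (- d) + 2 * d\<^sup>2 - 2 * (complex_of_real a)\<^sup>2)) / d\<^sup>2"
    if "d = csqrt (complex_of_real (a\<^sup>2 - 4 * b * c))" and "d \<noteq> 0" for d
    unfolding \<alpha> using that by (intro trace_coeff_closed_form) (simp_all add: mult.assoc)
  moreover have "cmod z < 1"
    if "is_eigenvalue (mat_exp (vector [vector [-a, b], vector [-c, 0]] :: real^2^2)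
                   ** mat_exp (vector [vector [-a, -b], vector [c, 0]] :: real^2^2)) z" for z
  proof (rule quadratic_root_in_unit_disc)
    show "z\<^sup>2 + of_real \<alpha> * z + of_real \<beta> = 0"
      using is_eigenvalue_charpoly_root_2x2[OF that assms(4)] .
    show "0 < \<beta>" "\<beta> < 1"
      using assms(1) by (simp_all add: \<beta>)
    show "\<bar>\<alpha>\<bar> < 1 + \<beta>"
      unfolding \<alpha> \<beta> abs_minus_cancel using trace_coeff_lt[of a "b * c"] assms(1-3) by simp
  qed
  ultimately show ?thesis
    using \<beta> by (simp add: Let_def)
qed

end
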